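(* Let $\mathbf v\in\mathbb R^{n\times m}_{<0}$ and $\mathbf b\in\mathbb R^n_{<0}$. The number of faces of the Pareto frontier of $\mathcal U(\mathbf v)$ and the number of competitive utility profiles $|\mathrm{CU}(\mathbf v,\mathbf b)|$ are both at most $(2m+1)^{n(n-1)/2}$.
   Context: Setup: agents $[n]$, chores $[m]$, allocations $\mathbf z\in\mathbb R^{n\times m}_{\ge0}$ with column sums $1$, $u_i(\mathbf z_i)=\sum_jv_{i,j}z_{i,j}$, $\mathcal U(\mathbf v)=\{\mathbf u(\mathbf z)\}$. A face of the Pareto frontier is a set $\arg\max_{\mathbf u\in\mathcal U(\mathbf v)}\langle\tau,\mathbf u\rangle$ for some $\tau\in\mathbb R^n_{>0}$. Competitive allocation for budgets $\mathbf b$: there exist prices $\mathbf p\in\mathbb R^m_{<0}$ such that each $\mathbf z_i$ maximizes $u_i$ over bundles $\mathbf x\in\mathbb R^m_{\ge0}$ with $\sum_jp_jx_j\le b_i$; $\mathrm{CU}(\mathbf v,\mathbf b)$ is the set of utility profiles of competitive allocations. *)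

theory Defs
  imports Complex_Main
begin

(* Agents are {..<n}, chores are {..<m}. Valuations v i j, allocations z i j.
   Utility profiles are functions nat => real, extended by 0 outside {..<n}. *)

definition allocation :: "nat \<Rightarrow> nat \<Rightarrow> (nat \<Rightarrow> nat \<Rightarrow> real) \<Rightarrow> bool" where
  "allocation n m z \<longleftrightarrow>
     (\<forall>i<n. \<forall>j<m. z i j \<ge> 0) \<and> (\<forall>j<m. (\<Sum>i<n. z i j) = 1)"

definition utility :: "nat \<Rightarrow> (nat \<Rightarrow> nat \<Rightarrow> real) \<Rightarrow> nat \<Rightarrow> (nat \<Rightarrow> real) \<Rightarrow> real" where
  "utility m v i x = (\<Sum>j<m. v i j * x j)"

definition util_profile :: "nat \<Rightarrow> nat \<Rightarrow> (nat \<Rightarrow> nat \<Rightarrow> real) \<Rightarrow> (nat \<Rightarrow> nat \<Rightarrow> real) \<Rightarrow> (nat \<Rightarrow> real)" where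
  "util_profile n m v z = (\<lambda>i. if i < n then utility m v i (z i) else 0)"

definition util_set :: "nat \<Rightarrow> nat \<Rightarrow> (nat \<Rightarrow> nat \<Rightarrow> real) \<Rightarrow> (nat \<Rightarrow> real) set" where
  "util_set n m v = {util_profile n m v z | z. allocation n m z}"

definition face :: "nat \<Rightarrow> (nat \<Rightarrow> real) set \<Rightarrow> (nat \<Rightarrow> real) \<Rightarrow> (nat \<Rightarrow> real) set" where
  "face n U \<tau> = {u \<in> U. \<forall>u'\<in>U. (\<Sum>i<n. \<tau> i * u' i) \<le> (\<Sum>i<n. \<tau> i * u i)}"

definition pareto_faces :: "nat \<Rightarrow> nat \<Rightarrow> (nat \<Rightarrow> nat \<Rightarrow> real) \<Rightarrow> (nat \<Rightarrow> real) set set" where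
  "pareto_faces n m v = {face n (util_set n m v) \<tau> | \<tau>. \<forall>i<n. \<tau> i > 0}"

definition is_bundle :: "nat \<Rightarrow> (nat \<Rightarrow> real) \<Rightarrow> bool" where
  "is_bundle m x \<longleftrightarrow> (\<forall>j<m. x j \<ge> 0)"

definition affordable :: "nat \<Rightarrow> (nat \<Rightarrow> real) \<Rightarrow> real \<Rightarrow> (nat \<Rightarrow> real) \<Rightarrow> bool" where
  "affordable m p bi x \<longleftrightarrow> is_bundle m x \<and> (\<Sum>j<m. p j * x j) \<le> bi"

definition competitive :: "nat \<Rightarrow> nat \<Rightarrow> (nat \<Rightarrow> nat \<Rightarrow> real) \<Rightarrow> (nat \<Rightarrow> real) \<Rightarrow> (nat \<Rightarrow> nat \<Rightarrow> real) \<Rightarrow> bool" where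
  "competitive n m v b z \<longleftrightarrow> allocation n m z \<and>
     (\<exists>p. (\<forall>j<m. p j < 0) \<and>
        (\<forall>i<n. affordable m p (b i) (z i) \<and>
           (\<forall>x. affordable m p (b i) x \<longrightarrow> utility m v i x \<le> utility m v i (z i))))"

definition CU :: "nat \<Rightarrow> nat \<Rightarrow> (nat \<Rightarrow> nat \<Rightarrow> real) \<Rightarrow> (nat \<Rightarrow> real) \<Rightarrow> (nat \<Rightarrow> real) set" where
  "CU n m v b = {util_profile n m v z | z. competitive n m v b z}"

end

(*
  The face in direction \<tau> consists of the utility profiles of the allocations that give
  each chore j only to agents maximising \<tau> i * v i j. So it depends on \<tau> only through
  the position of \<tau> c / \<tau> a relative to the m ratios v a j / v c j, for each of the
  n(n-1)/2 pairs a < c, and each such position is one of 2m+1 possibilities.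
  A competitive profile u with prices p lies on the face with weights b i / u i: rescaling
  any bundle x to cost b i shows (b i / u i) * u_i(x) \<le> p \<bullet> x, and summing over an
  allocation bounds the weighted welfare by \<Sum>j p j \<le> \<Sum>i b i, which u attains.
  By AM-GM two competitive profiles on the same such face coincide, so CU injects into
  the set of faces.
*)

theory Submission
  imports Defs "HOL-Library.FuncSet"
begin

lemma convex_comb_le_Max:
  fixes a w :: "'a \<Rightarrow> real"
  assumes "finite I" "\<forall>i\<in>I. w i \<ge> 0" "sum w I = 1"
  shows "(\<Sum>i\<in>I. w i * a i) \<le> Max (a ` I)"
proof -
  have "I \<noteq> {}" using assms(3) by auto
  hence "(\<Sum>i\<in>I. w i * a i) \<le> (\<Sum>i\<in>I. w i * Max (a ` I))"
    using assms by (intro sum_mono mult_left_mono) auto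
  also have "\<dots> = Max (a ` I)" using assms(3) by (simp add: sum_distrib_right[symmetric])
  finally show ?thesis .
qed

lemma convex_comb_eq_Max_iff:
  fixes a w :: "'a \<Rightarrow> real"
  assumes "finite I" "\<forall>i\<in>I. w i \<ge> 0" "sum w I = 1"
  shows "(\<Sum>i\<in>I. w i * a i) = Max (a ` I) \<longleftrightarrow> (\<forall>i\<in>I. w i > 0 \<longrightarrow> (\<forall>k\<in>I. a k \<le> a i))"
proof -
  let ?M = "Max (a ` I)"
  have "I \<noteq> {}" using assms(3) by auto
  have "(\<Sum>i\<in>I. w i * (?M - a i)) = ?M - (\<Sum>i\<in>I. w i * a i)"
    using assms(3) by (simp add: right_diff_distrib sum_subtractf sum_distrib_right[symmetric])
  hence "(\<Sum>i\<in>I. w i * a i) = ?M \<longleftrightarrow> (\<Sum>i\<in>I. w i * (?M - a i)) = 0"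
    by linarith
  also have "\<dots> \<longleftrightarrow> (\<forall>i\<in>I. w i * (?M - a i) = 0)"
    using assms by (intro sum_nonneg_eq_0_iff) auto
  also have "\<dots> \<longleftrightarrow> (\<forall>i\<in>I. w i > 0 \<longrightarrow> ?M \<le> a i)"
  proof (intro ball_cong refl)
    fix i assume "i \<in> I"
    then have "w i \<ge> 0" "a i \<le> ?M" using assms by auto
    then show "w i * (?M - a i) = 0 \<longleftrightarrow> (w i > 0 \<longrightarrow> ?M \<le> a i)" by auto
  qed
  also have "\<dots> \<longleftrightarrow> (\<forall>i\<in>I. w i > 0 \<longrightarrow> (\<forall>k\<in>I. a k \<le> a i))"
    using assms(1) \<open>I \<noteq> {}\<close> by simp
  finally show ?thesis .
qed

definition maximizer_supported ::
    "nat \<Rightarrow> nat \<Rightarrow> (nat \<Rightarrow> nat \<Rightarrow> real) \<Rightarrow> (nat \<Rightarrow> real) \<Rightarrow> (nat \<Rightarrow> nat \<Rightarrow> real) \<Rightarrow> bool" where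
  "maximizer_supported n m v \<tau> z \<longleftrightarrow>
     (\<forall>i<n. \<forall>j<m. z i j > 0 \<longrightarrow> (\<forall>k<n. \<tau> k * v k j \<le> \<tau> i * v i j))"

definition max_welfare :: "nat \<Rightarrow> nat \<Rightarrow> (nat \<Rightarrow> nat \<Rightarrow> real) \<Rightarrow> (nat \<Rightarrow> real) \<Rightarrow> real" where
  "max_welfare n m v \<tau> = (\<Sum>j<m. Max ((\<lambda>i. \<tau> i * v i j) ` {..<n}))"

lemma weighted_sum_util_profile:
  "(\<Sum>i<n. \<tau> i * util_profile n m v z i) = (\<Sum>j<m. \<Sum>i<n. z i j * (\<tau> i * v i j))"
  unfolding util_profile_def utility_def
  by (simp add: sum_distrib_left sum.swap[of _ "{..<n}"] ac_simps)

lemma weighted_sum_util_profile_le_max_welfare: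
  assumes "allocation n m z"
  shows "(\<Sum>i<n. \<tau> i * util_profile n m v z i) \<le> max_welfare n m v \<tau>"
  unfolding weighted_sum_util_profile max_welfare_def
  using assms by (intro sum_mono convex_comb_le_Max) (auto simp: allocation_def)

lemma weighted_sum_util_profile_eq_max_welfare_iff:
  assumes z: "allocation n m z"
  shows "(\<Sum>i<n. \<tau> i * util_profile n m v z i) = max_welfare n m v \<tau> \<longleftrightarrow>
         maximizer_supported n m v \<tau> z"
proof -
  let ?col = "\<lambda>j. \<Sum>i<n. z i j * (\<tau> i * v i j)" and ?M = "\<lambda>j. Max ((\<lambda>i. \<tau> i * v i j) ` {..<n})"
  have col_le: "?col j \<le> ?M j" if "j \<in> {..<m}" for j
    using z that by (intro convex_comb_le_Max) (auto simp: allocation_def)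
  have "sum ?col {..<m} = sum ?M {..<m} \<longleftrightarrow> (\<forall>j\<in>{..<m}. ?col j = ?M j)"
  proof
    assume eq: "sum ?col {..<m} = sum ?M {..<m}"
    show "\<forall>j\<in>{..<m}. ?col j = ?M j"
      using sum_mono_inv[OF eq col_le _ finite_lessThan] by blast
  qed simp
  also have "\<dots> \<longleftrightarrow> (\<forall>j\<in>{..<m}. \<forall>i<n. z i j > 0 \<longrightarrow> (\<forall>k<n. \<tau> k * v k j \<le> \<tau> i * v i j))"
  proof (rule ball_cong[OF refl])
    fix j assume "j \<in> {..<m}"
    then have "\<forall>i\<in>{..<n}. z i j \<ge> 0" "(\<Sum>i<n. z i j) = 1"
      using z by (auto simp: allocation_def)
    from convex_comb_eq_Max_iff[OF finite_lessThan this, of "\<lambda>i. \<tau> i * v i j"]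
    show "?col j = ?M j \<longleftrightarrow> (\<forall>i<n. z i j > 0 \<longrightarrow> (\<forall>k<n. \<tau> k * v k j \<le> \<tau> i * v i j))"
      by (simp only: Ball_def lessThan_iff)
  qed
  also have "\<dots> \<longleftrightarrow> maximizer_supported n m v \<tau> z"
    unfolding maximizer_supported_def by blast
  finally show ?thesis unfolding weighted_sum_util_profile max_welfare_def .
qed

lemma exists_maximizer_supported_allocation:
  assumes "allocation n m z"
  obtains z' where "allocation n m z'" "maximizer_supported n m v \<tau> z'"
proof (cases "m = 0")
  case True
  with assms show ?thesis by (intro that) (simp_all add: maximizer_supported_def)
next
  case False
  hence "n > 0" using assms unfolding allocation_def by (metis lessThan_0 sum.empty zero_neq_one gr0I)
  have maximizer_exists: "\<exists>i. i < n \<and> (\<forall>k<n. \<tau> k * v k j \<le> \<tau> i * v i j)" for j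
  proof -
    let ?A = "(\<lambda>i. \<tau> i * v i j) ` {..<n}"
    have "Max ?A \<in> ?A" using \<open>n > 0\<close> by (intro Max_in) auto
    then obtain i where "i < n" "Max ?A = \<tau> i * v i j" by blast
    moreover have "\<tau> k * v k j \<le> Max ?A" if "k < n" for k using that by (intro Max_ge) auto
    ultimately show "\<exists>i. i < n \<and> (\<forall>k<n. \<tau> k * v k j \<le> \<tau> i * v i j)" by metis
  qed
  define g where "g j = (SOME i. i < n \<and> (\<forall>k<n. \<tau> k * v k j \<le> \<tau> i * v i j))" for j
  have g: "g j < n \<and> (\<forall>k<n. \<tau> k * v k j \<le> \<tau> (g j) * v (g j) j)" for j
    unfolding g_def by (rule someI_ex[OF maximizer_exists])
  let ?z = "\<lambda>i j. if i = g j then 1 else 0 :: real"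
  have "allocation n m ?z" using g by (simp add: allocation_def)
  moreover have "maximizer_supported n m v \<tau> ?z"
    using g by (auto simp: maximizer_supported_def split: if_splits)
  ultimately show ?thesis by (rule that)
qed

lemma face_util_set:
  "face n (util_set n m v) \<tau> =
     {util_profile n m v z | z. allocation n m z \<and> maximizer_supported n m v \<tau> z}"
  (is "?F = ?S")
proof
  show "?S \<subseteq> ?F"
  proof
    fix u assume "u \<in> ?S"
    then obtain z where u: "u = util_profile n m v z" "allocation n m z" "maximizer_supported n m v \<tau> z"
      by auto
    have "(\<Sum>i<n. \<tau> i * u' i) \<le> (\<Sum>i<n. \<tau> i * u i)" if u': "u' \<in> util_set n m v" for u'
    proof -
      obtain z' where "u' = util_profile n m v z'" "allocation n m z'"
        using u' by (auto simp: util_set_def)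
      then have "(\<Sum>i<n. \<tau> i * u' i) \<le> max_welfare n m v \<tau>"
        using weighted_sum_util_profile_le_max_welfare by blast
      also have "\<dots> = (\<Sum>i<n. \<tau> i * u i)"
        using weighted_sum_util_profile_eq_max_welfare_iff[OF u(2), of \<tau> v] u(1,3) by simp
      finally show ?thesis .
    qed
    with u show "u \<in> ?F" by (auto simp: face_def util_set_def)
  qed
next
  show "?F \<subseteq> ?S"
  proof
    fix u assume u: "u \<in> ?F"
    then obtain z where z: "u = util_profile n m v z" "allocation n m z"
      by (auto simp: face_def util_set_def)
    obtain z' where z': "allocation n m z'" "maximizer_supported n m v \<tau> z'"
      using exists_maximizer_supported_allocation[OF z(2)] .
    have "max_welfare n m v \<tau> = (\<Sum>i<n. \<tau> i * util_profile n m v z' i)"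
      using weighted_sum_util_profile_eq_max_welfare_iff[OF z'(1), of \<tau> v] z'(2) by simp
    also have "\<dots> \<le> (\<Sum>i<n. \<tau> i * u i)"
      using u z' by (auto simp: face_def util_set_def)
    finally have "(\<Sum>i<n. \<tau> i * u i) = max_welfare n m v \<tau>"
      using weighted_sum_util_profile_le_max_welfare[OF z(2), of \<tau> v] z(1) by simp
    with z show "u \<in> ?S" using weighted_sum_util_profile_eq_max_welfare_iff by blast
  qed
qed

(* 2 * #{r \<in> R. r < t} + [t \<in> R]: the position of t among the points of R *)
definition cut_rank :: "real set \<Rightarrow> real \<Rightarrow> nat" where
  "cut_rank R t = card {r\<in>R. r < t} + card {r\<in>R. r \<le> t}"

lemma cut_rank_le:
  assumes "finite R"
  shows "cut_rank R t \<le> 2 * card R"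
proof -
  have "card {r\<in>R. r < t} \<le> card R" "card {r\<in>R. r \<le> t} \<le> card R"
    using assms by (auto intro: card_mono)
  then show ?thesis by (simp add: cut_rank_def)
qed

lemma cut_rank_eq_imp_same_cut:
  assumes "finite R" "cut_rank R t = cut_rank R t'"
  shows "{r\<in>R. r < t} = {r\<in>R. r < t'} \<and> {r\<in>R. r \<le> t} = {r\<in>R. r \<le> t'}"
proof -
  have le_case: "{r\<in>R. r < s} = {r\<in>R. r < s'} \<and> {r\<in>R. r \<le> s} = {r\<in>R. r \<le> s'}"
    if "s \<le> s'" "cut_rank R s = cut_rank R s'" for s s'
  proof -
    have sub: "{r\<in>R. r < s} \<subseteq> {r\<in>R. r < s'}" "{r\<in>R. r \<le> s} \<subseteq> {r\<in>R. r \<le> s'}"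
      using \<open>s \<le> s'\<close> by auto
    have fin: "finite {r\<in>R. r < s'}" "finite {r\<in>R. r \<le> s'}" using assms(1) by auto
    have "card {r\<in>R. r < s} \<le> card {r\<in>R. r < s'}" "card {r\<in>R. r \<le> s} \<le> card {r\<in>R. r \<le> s'}"
      using card_mono[OF fin(1) sub(1)] card_mono[OF fin(2) sub(2)] .
    then have "card {r\<in>R. r < s} = card {r\<in>R. r < s'}" "card {r\<in>R. r \<le> s} = card {r\<in>R. r \<le> s'}"
      using that(2) unfolding cut_rank_def by linarith+
    then show ?thesis using card_subset_eq[OF fin(1) sub(1)] card_subset_eq[OF fin(2) sub(2)] by blast
  qed
  show ?thesis
  proof (cases "t \<le> t'")
    case True
    then show ?thesis using le_case assms(2) by blast
  next
    case False
    then have "t' \<le> t" by simp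
    from le_case[OF this assms(2)[symmetric]] show ?thesis by (metis (no_types))
  qed
qed

definition pair_ranks :: "nat \<Rightarrow> nat \<Rightarrow> (nat \<Rightarrow> nat \<Rightarrow> real) \<Rightarrow> (nat \<Rightarrow> real) \<Rightarrow> nat \<times> nat \<Rightarrow> nat" where
  "pair_ranks n m v \<tau> =
     (\<lambda>(c, a) \<in> SIGMA c:{..<n}. {..<c}. cut_rank ((\<lambda>j. v a j / v c j) ` {..<m}) (\<tau> c / \<tau> a))"

lemma pair_ranks_in_PiE: "pair_ranks n m v \<tau> \<in> (SIGMA c:{..<n}. {..<c}) \<rightarrow>\<^sub>E {..2*m}"
proof -
  have "cut_rank ((\<lambda>j. v a j / v c j) ` {..<m}) t \<le> 2 * m" for a c t
    using cut_rank_le[of "(\<lambda>j. v a j / v c j) ` {..<m}" t] card_image_le[of "{..<m}" "\<lambda>j. v a j / v c j"]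
    by simp
  then show ?thesis unfolding pair_ranks_def by auto
qed

lemma card_pair_ranks_space:
  "card ((SIGMA c:{..<n}. {..<c}) \<rightarrow>\<^sub>E {..2*m}) = (2*m+1) ^ (n*(n-1) div 2)"
proof -
  have "card (SIGMA c:{..<n}. {..<c}) = n * (n - 1) div 2"
    using Sum_Ico_nat[of 0 n] by (simp add: lessThan_atLeast0)
  then show ?thesis by (simp add: card_PiE)
qed

lemma weighted_le_iff_ratio_le:
  fixes x y s t :: real
  assumes "x < 0" "y < 0" "s > 0" "t > 0"
  shows "t * y \<le> s * x \<longleftrightarrow> x / y \<le> t / s"
    and "s * x \<le> t * y \<longleftrightarrow> t / s \<le> x / y"
  using assms by (simp_all add: divide_simps mult.commute)

lemma weighted_comparisons_eq_if_pair_ranks_eq: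
  assumes v: "\<forall>i<n. \<forall>j<m. v i j < 0"
    and \<tau>: "\<forall>i<n. \<tau> i > 0" and \<tau>': "\<forall>i<n. \<tau>' i > 0"
    and ranks: "pair_ranks n m v \<tau> = pair_ranks n m v \<tau>'"
    and "i < n" "k < n" "j < m"
  shows "\<tau> k * v k j \<le> \<tau> i * v i j \<longleftrightarrow> \<tau>' k * v k j \<le> \<tau>' i * v i j"
proof -
  have pair: "(\<tau> c * v c j \<le> \<tau> a * v a j \<longleftrightarrow> \<tau>' c * v c j \<le> \<tau>' a * v a j) \<and>
              (\<tau> a * v a j \<le> \<tau> c * v c j \<longleftrightarrow> \<tau>' a * v a j \<le> \<tau>' c * v c j)"
    if "a < c" "c < n" for a c
  proof -
    let ?R = "(\<lambda>j. v a j / v c j) ` {..<m}" and ?r = "v a j / v c j"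
    have "cut_rank ?R (\<tau> c / \<tau> a) = cut_rank ?R (\<tau>' c / \<tau>' a)"
      using fun_cong[OF ranks, of "(c, a)"] that by (simp add: pair_ranks_def)
    from cut_rank_eq_imp_same_cut[OF _ this]
    have le: "?r \<le> \<tau> c / \<tau> a \<longleftrightarrow> ?r \<le> \<tau>' c / \<tau>' a"
      and less: "?r < \<tau> c / \<tau> a \<longleftrightarrow> ?r < \<tau>' c / \<tau>' a"
      using \<open>j < m\<close> by blast+
    have signs: "v a j < 0" "v c j < 0" "\<tau> a > 0" "\<tau> c > 0" "\<tau>' a > 0" "\<tau>' c > 0"
      using v \<tau> \<tau>' that \<open>j < m\<close> by auto
    have "\<tau> c * v c j \<le> \<tau> a * v a j \<longleftrightarrow> ?r \<le> \<tau> c / \<tau> a"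
      "\<tau>' c * v c j \<le> \<tau>' a * v a j \<longleftrightarrow> ?r \<le> \<tau>' c / \<tau>' a"
      "\<tau> a * v a j \<le> \<tau> c * v c j \<longleftrightarrow> \<not> ?r < \<tau> c / \<tau> a"
      "\<tau>' a * v a j \<le> \<tau>' c * v c j \<longleftrightarrow> \<not> ?r < \<tau>' c / \<tau>' a"
      using weighted_le_iff_ratio_le[OF signs(1,2)] signs(3-6) by (simp_all add: not_less)
    then show ?thesis using le less by simp
  qed
  show ?thesis
    using pair[of i k] pair[of k i] \<open>i < n\<close> \<open>k < n\<close> by (cases i k rule: linorder_cases) auto
qed

lemma face_eq_if_pair_ranks_eq:
  assumes "\<forall>i<n. \<forall>j<m. v i j < 0" "\<forall>i<n. \<tau> i > 0" "\<forall>i<n. \<tau>' i > 0"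
    and "pair_ranks n m v \<tau> = pair_ranks n m v \<tau>'"
  shows "face n (util_set n m v) \<tau> = face n (util_set n m v) \<tau>'"
proof -
  have "maximizer_supported n m v \<tau> = maximizer_supported n m v \<tau>'"
    using weighted_comparisons_eq_if_pair_ranks_eq[OF assms]
    by (intro ext) (simp add: maximizer_supported_def)
  then show ?thesis by (simp add: face_util_set)
qed

lemma finite_card_image_le_if_factors:
  assumes "finite (g ` A)" "\<And>x y. x \<in> A \<Longrightarrow> y \<in> A \<Longrightarrow> g x = g y \<Longrightarrow> f x = f y"
  shows "finite (f ` A) \<and> card (f ` A) \<le> card (g ` A)"
proof -
  have "f ` A = (f \<circ> inv_into A g) ` (g ` A)"
  proof (rule set_eqI)
    fix y
    have "f x = f (inv_into A g (g x))" if "x \<in> A" for x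
      using that by (intro assms(2)) (auto intro: inv_into_into f_inv_into_f[symmetric])
    then show "y \<in> f ` A \<longleftrightarrow> y \<in> (f \<circ> inv_into A g) ` (g ` A)" by auto
  qed
  then show ?thesis using assms(1) card_image_le by simp
qed

lemma finite_card_pareto_faces:
  assumes "\<forall>i<n. \<forall>j<m. v i j < 0"
  shows "finite (pareto_faces n m v) \<and> card (pareto_faces n m v) \<le> (2*m+1) ^ (n*(n-1) div 2)"
proof -
  let ?T = "{\<tau>. \<forall>i<n. \<tau> i > 0}" and ?P = "(SIGMA c:{..<n}. {..<c}) \<rightarrow>\<^sub>E {..2*m}"
  have faces: "pareto_faces n m v = face n (util_set n m v) ` ?T"
    unfolding pareto_faces_def by blast
  have sub: "pair_ranks n m v ` ?T \<subseteq> ?P" using pair_ranks_in_PiE by blast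
  have fin: "finite ?P" by (simp add: finite_PiE)
  have "finite (pareto_faces n m v) \<and> card (pareto_faces n m v) \<le> card (pair_ranks n m v ` ?T)"
    unfolding faces
  proof (rule finite_card_image_le_if_factors)
    show "finite (pair_ranks n m v ` ?T)" using finite_subset[OF sub fin] .
  next
    fix \<tau> \<tau>' assume "\<tau> \<in> ?T" "\<tau>' \<in> ?T" "pair_ranks n m v \<tau> = pair_ranks n m v \<tau>'"
    then show "face n (util_set n m v) \<tau> = face n (util_set n m v) \<tau>'"
      using face_eq_if_pair_ranks_eq[OF assms] by blast
  qed
  moreover have "card (pair_ranks n m v ` ?T) \<le> card ?P" using card_mono[OF fin sub] .
  ultimately show ?thesis using card_pair_ranks_space by simp
qed

lemma sum_neg_mult_nonneg_less_0:
  fixes q x :: "nat \<Rightarrow> real"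
  assumes "\<forall>j<m. q j < 0" "\<forall>j<m. x j \<ge> 0" "j0 < m" "x j0 \<noteq> 0"
  shows "(\<Sum>j<m. q j * x j) < 0"
proof -
  have "0 < (\<Sum>j<m. - (q j * x j))"
  proof (rule sum_pos2[of _ j0])
    show "0 < - (q j0 * x j0)" using assms by (simp add: mult_neg_pos order_le_neq_trans)
  qed (use assms in \<open>auto simp: mult_nonpos_nonneg less_imp_le\<close>)
  then show ?thesis by (simp add: sum_negf)
qed

lemma scaled_utility_le_cost:
  assumes bi: "bi < 0" and ui: "ui < 0" and p: "\<forall>j<m. p j < 0"
    and opt: "\<forall>x. affordable m p bi x \<longrightarrow> utility m v i x \<le> ui"
    and x: "is_bundle m x"
  shows "bi / ui * utility m v i x \<le> (\<Sum>j<m. p j * x j)"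
proof (cases "\<forall>j<m. x j = 0")
  case True
  then show ?thesis by (simp add: utility_def)
next
  case False
  define c where "c = (\<Sum>j<m. p j * x j)"
  have c: "c < 0"
    using False p x unfolding c_def is_bundle_def by (metis sum_neg_mult_nonneg_less_0)
  have "affordable m p bi (\<lambda>j. bi / c * x j)"
  proof -
    have "(\<Sum>j<m. p j * (bi / c * x j)) = bi / c * (\<Sum>j<m. p j * x j)"
      by (simp add: sum_distrib_left ac_simps)
    then have "(\<Sum>j<m. p j * (bi / c * x j)) = bi / c * c"
      by (simp only: c_def)
    moreover have "\<forall>j<m. 0 \<le> bi / c * x j"
      using x bi c by (intro allI impI mult_nonneg_nonneg) (auto simp: is_bundle_def divide_neg_neg less_imp_le)
    ultimately show ?thesis using c by (simp add: affordable_def is_bundle_def)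
  qed
  with opt have "utility m v i (\<lambda>j. bi / c * x j) \<le> ui" by blast
  moreover have "utility m v i (\<lambda>j. bi / c * x j) = bi / c * utility m v i x"
    by (simp add: utility_def sum_distrib_left ac_simps)
  ultimately have "bi / c * utility m v i x \<le> ui" by simp
  then have "bi / c * utility m v i x * (c / ui) \<le> ui * (c / ui)"
    using c ui by (intro mult_right_mono) (auto simp: divide_nonpos_neg)
  then show ?thesis using c ui by (simp add: c_def field_simps)
qed

lemma competitive_util_profile_neg:
  assumes v: "\<forall>i<n. \<forall>j<m. v i j < 0" and b: "\<forall>i<n. b i < 0"
    and z: "competitive n m v b z" and i: "i < n"
  shows "util_profile n m v z i < 0"
proof -
  obtain p where "allocation n m z" "affordable m p (b i) (z i)"
    using z i unfolding competitive_def by blast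
  then have nonneg: "\<forall>j<m. z i j \<ge> 0" and "(\<Sum>j<m. p j * z i j) \<noteq> 0"
    using b i by (auto simp: affordable_def is_bundle_def)
  then obtain j0 where "j0 < m" "z i j0 \<noteq> 0"
    by (metis (mono_tags, lifting) mult_zero_right sum.neutral lessThan_iff)
  then have "utility m v i (z i) < 0"
    using v i nonneg unfolding utility_def by (intro sum_neg_mult_nonneg_less_0) auto
  then show ?thesis using i by (simp add: util_profile_def)
qed

lemma competitive_util_profile_in_face:
  assumes v: "\<forall>i<n. \<forall>j<m. v i j < 0" and b: "\<forall>i<n. b i < 0"
    and z: "competitive n m v b z"
  shows "util_profile n m v z \<in> face n (util_set n m v) (\<lambda>i. b i / util_profile n m v z i)"
proof -
  let ?u = "util_profile n m v z"
  obtain p where al: "allocation n m z" and p: "\<forall>j<m. p j < 0"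
    and aff: "\<forall>i<n. affordable m p (b i) (z i)"
    and opt: "\<forall>i<n. \<forall>x. affordable m p (b i) x \<longrightarrow> utility m v i x \<le> utility m v i (z i)"
    using z unfolding competitive_def by blast
  have neg: "?u i < 0" if "i < n" for i
    using competitive_util_profile_neg[OF v b z that] .
  have "(\<Sum>i<n. b i / ?u i * u' i) \<le> (\<Sum>i<n. b i / ?u i * ?u i)" if "u' \<in> util_set n m v" for u'
  proof -
    obtain z' where u': "u' = util_profile n m v z'" and al': "allocation n m z'"
      using \<open>u' \<in> util_set n m v\<close> by (auto simp: util_set_def)
    have "(\<Sum>i<n. b i / ?u i * u' i) \<le> (\<Sum>i<n. \<Sum>j<m. p j * z' i j)"
    proof (rule sum_mono)
      fix i assume "i \<in> {..<n}"
      then show "b i / ?u i * u' i \<le> (\<Sum>j<m. p j * z' i j)"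
        using scaled_utility_le_cost[of "b i" "?u i" m p v i "z' i"] b neg p opt al'
        by (simp add: u' util_profile_def allocation_def is_bundle_def)
    qed
    also have "\<dots> = (\<Sum>j<m. p j * (\<Sum>i<n. z' i j))"
      by (simp add: sum_distrib_left sum.swap[of _ "{..<m}"])
    also have "\<dots> = (\<Sum>j<m. p j * (\<Sum>i<n. z i j))"
      using al al' by (simp add: allocation_def)
    also have "\<dots> = (\<Sum>i<n. \<Sum>j<m. p j * z i j)"
      by (simp add: sum_distrib_left sum.swap[of _ "{..<m}"] ac_simps)
    also have "\<dots> \<le> (\<Sum>i<n. b i)"
      using aff by (intro sum_mono) (simp add: affordable_def)
    also have "\<dots> = (\<Sum>i<n. b i / ?u i * ?u i)"
    proof (rule sum.cong[OF refl])
      fix i assume "i \<in> {..<n}"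
      then have "?u i \<noteq> 0" using neg by fastforce
      then show "b i = b i / ?u i * ?u i" by simp
    qed
    finally show ?thesis .
  qed
  moreover have "?u \<in> util_set n m v" using al by (auto simp: util_set_def)
  ultimately show ?thesis by (simp add: face_def)
qed

lemma face_weighted_sum_eq:
  assumes "u \<in> face n U \<tau>" "u' \<in> face n U \<tau>"
  shows "(\<Sum>i<n. \<tau> i * u i) = (\<Sum>i<n. \<tau> i * u' i)"
  using assms by (auto simp: face_def intro: antisym)

lemma scaled_ratio_sum_le:
  fixes b x y :: real
  assumes "b < 0" "x < 0" "y < 0"
  shows "b / x * y + b / y * x \<le> 2 * b"
    and "b / x * y + b / y * x = 2 * b \<longleftrightarrow> x = y"
proof -
  have xy: "x * y > 0" using assms by (simp add: mult_neg_neg)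
  have diff: "b / x * y + b / y * x - 2 * b = b * (x - y)\<^sup>2 / (x * y)"
    using assms by (simp add: field_simps power2_eq_square)
  have "b * (x - y)\<^sup>2 \<le> 0" using assms by (simp add: mult_nonpos_nonneg)
  then have "b * (x - y)\<^sup>2 / (x * y) \<le> 0" using xy by (rule divide_nonpos_pos)
  then show "b / x * y + b / y * x \<le> 2 * b" using diff by linarith
  have "b * (x - y)\<^sup>2 / (x * y) = 0 \<longleftrightarrow> x = y" using assms xy by simp
  then show "b / x * y + b / y * x = 2 * b \<longleftrightarrow> x = y" using diff by linarith
qed

lemma eq_if_budget_weighted_faces_eq:
  assumes b: "\<forall>i<n. b i < 0" and u: "\<forall>i<n. u i < 0" and u': "\<forall>i<n. u' i < 0"
    and outside: "\<forall>i\<ge>n. u i = 0" "\<forall>i\<ge>n. u' i = 0"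
    and face_u: "u \<in> face n U (\<lambda>i. b i / u i)" and face_u': "u' \<in> face n U (\<lambda>i. b i / u' i)"
    and faces_eq: "face n U (\<lambda>i. b i / u i) = face n U (\<lambda>i. b i / u' i)"
  shows "u = u'"
proof -
  have self: "(\<Sum>i<n. b i / w i * w i) = sum b {..<n}" if "\<forall>i<n. w i < 0" for w
    using that by (intro sum.cong) auto
  have "(\<Sum>i<n. b i / u i * u' i) = sum b {..<n}"
    using face_weighted_sum_eq[OF face_u face_u'[folded faces_eq]] self[OF u] by linarith
  moreover have "(\<Sum>i<n. b i / u' i * u i) = sum b {..<n}"
    using face_weighted_sum_eq[OF face_u' face_u[unfolded faces_eq]] self[OF u'] by linarith
  ultimately have sum_eq: "(\<Sum>i<n. b i / u i * u' i + b i / u' i * u i) = (\<Sum>i<n. 2 * b i)"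
    by (simp add: sum.distrib sum_distrib_left[symmetric])
  have le: "b i / u i * u' i + b i / u' i * u i \<le> 2 * b i" if "i \<in> {..<n}" for i
    using b u u' that by (intro scaled_ratio_sum_le(1)) auto
  have "u i = u' i" for i
  proof (cases "i < n")
    case True
    then have "b i / u i * u' i + b i / u' i * u i = 2 * b i"
      using sum_mono_inv[OF sum_eq le] by simp
    then show ?thesis using scaled_ratio_sum_le(2)[of "b i" "u i" "u' i"] b u u' True by simp
  next
    case False
    then show ?thesis using outside by simp
  qed
  then show ?thesis by (rule ext)
qed

lemma finite_card_CU_le_card_pareto_faces:
  assumes v: "\<forall>i<n. \<forall>j<m. v i j < 0" and b: "\<forall>i<n. b i < 0"
    and fin: "finite (pareto_faces n m v)"
  shows "finite (CU n m v b) \<and> card (CU n m v b) \<le> card (pareto_faces n m v)"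
proof -
  let ?f = "\<lambda>u. face n (util_set n m v) (\<lambda>i. b i / u i)"
  have CU: "(\<forall>i<n. u i < 0) \<and> (\<forall>i\<ge>n. u i = 0) \<and> u \<in> ?f u" if u: "u \<in> CU n m v b" for u
  proof -
    obtain z where "u = util_profile n m v z" "competitive n m v b z"
      using u by (auto simp: CU_def)
    then show ?thesis
      using competitive_util_profile_neg[OF v b] competitive_util_profile_in_face[OF v b]
      by (auto simp: util_profile_def)
  qed
  have inj: "inj_on ?f (CU n m v b)"
  proof (rule inj_onI)
    fix u u' assume "u \<in> CU n m v b" "u' \<in> CU n m v b" "?f u = ?f u'"
    then show "u = u'" using CU eq_if_budget_weighted_faces_eq[OF b] by blast
  qed
  have "?f ` CU n m v b \<subseteq> pareto_faces n m v"
  proof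
    fix F assume "F \<in> ?f ` CU n m v b"
    then obtain u where "u \<in> CU n m v b" "F = ?f u" by blast
    moreover from this have "\<forall>i<n. b i / u i > 0" using CU b by (simp add: divide_neg_neg)
    ultimately show "F \<in> pareto_faces n m v" by (auto simp: pareto_faces_def)
  qed
  then show ?thesis
    using card_inj_on_le[OF inj _ fin] finite_imageD[OF finite_subset[OF _ fin] inj] by blast
qed

theorem corollary3:
  fixes n m :: nat and v :: "nat \<Rightarrow> nat \<Rightarrow> real" and b :: "nat \<Rightarrow> real"
  assumes "\<forall>i<n. \<forall>j<m. v i j < 0"
    and "\<forall>i<n. b i < 0"
  shows "finite (pareto_faces n m v) \<and> card (pareto_faces n m v) \<le> (2*m+1) ^ (n*(n-1) div 2)
       \<and> finite (CU n m v b) \<and> card (CU n m v b) \<le> (2*m+1) ^ (n*(n-1) div 2)"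
  using finite_card_pareto_faces[OF assms(1)] finite_card_CU_le_card_pareto_faces[OF assms]
  by auto

end
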